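(* Let $A$ and $\Lambda$ be as in the context. Then every eigenvalue $\lambda$ of the $(n+1)\times(n+1)$ matrix $\Lambda A^T A$ is real and satisfies $0 \le \lambda \le 1$.
   Context: Let $n \le m$ be nonnegative integers. Let $B_0,\dots,B_n$ be real-valued basis functions (e.g. B-spline basis functions, tensor-product B-spline basis functions, or T-spline blending functions) that are nonnegative and form a partition of unity, i.e. $B_i(\mathbf t)\ge 0$ and $\sum_{i=0}^n B_i(\mathbf t)=1$ for every parameter $\mathbf t$. Let $\mathbf t_0,\dots,\mathbf t_m$ be parameter values assigned to data points, and assume that for every $i$ there is some $j$ with $B_i(\mathbf t_j)\neq 0$. Let $A$ be the $(m+1)\times(n+1)$ matrix with entries $A_{ji}=B_i(\mathbf t_j)$ ($j=0,\dots,m$, $i=0,\dots,n$). Let $\Lambda=\mathrm{diag}\big(1/\sum_{j=0}^m B_0(\mathbf t_j),\dots,1/\sum_{j=0}^m B_n(\mathbf t_j)\big)$, a diagonal matrix with positive diagonal entries. *)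

theory Defs
  imports Jordan_Normal_Form.Char_Poly
begin

definition colloc_mat :: "nat \<Rightarrow> nat \<Rightarrow> (nat \<Rightarrow> 'p \<Rightarrow> real) \<Rightarrow> (nat \<Rightarrow> 'p) \<Rightarrow> real mat" where
  "colloc_mat n m B t = mat (m+1) (n+1) (\<lambda>(j,i). B i (t j))"

definition Lambda_mat :: "nat \<Rightarrow> nat \<Rightarrow> (nat \<Rightarrow> 'p \<Rightarrow> real) \<Rightarrow> (nat \<Rightarrow> 'p) \<Rightarrow> real mat" where
  "Lambda_mat n m B t = mat (n+1) (n+1) (\<lambda>(i,k). if i = k then 1 / (\<Sum>j\<le>m. B i (t j)) else 0)"

end

theory Submission
  imports Defs
begin

text \<open>Write \<open>G = A\<^sup>T A\<close> and \<open>D = \<Lambda>\<^sup>-\<^sup>1 = diag(s\<^sub>i)\<close> with \<open>s\<^sub>i = \<Sum>\<^sub>j B\<^sub>i(t\<^sub>j)\<close>.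
  An eigenvector \<open>v\<close> of \<open>\<Lambda> G\<close> for \<open>\<lambda>\<close> satisfies \<open>G v = \<lambda> D v\<close>, hence
  \<open>\<lambda> \<cdot> v\<^sup>* D v = v\<^sup>* G v = \<parallel>A v\<parallel>\<^sup>2\<close> with \<open>v\<^sup>* D v > 0\<close>, so \<open>\<lambda>\<close> is real and nonnegative.
  Since every row of \<open>A\<close> is a probability vector, Jensen's inequality gives
  \<open>\<bar>(A v)\<^sub>j\<bar>\<^sup>2 \<le> \<Sum>\<^sub>k A\<^sub>j\<^sub>k \<bar>v\<^sub>k\<bar>\<^sup>2\<close>; summing over \<open>j\<close> yields \<open>\<parallel>A v\<parallel>\<^sup>2 \<le> v\<^sup>* D v\<close>, i.e. \<open>\<lambda> \<le> 1\<close>.\<close>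

lemma sum_weighted_square_le:
  fixes a x :: "'i \<Rightarrow> real"
  assumes "\<And>k. k \<in> I \<Longrightarrow> 0 \<le> a k" and "sum a I = 1"
  shows "(\<Sum>k\<in>I. a k * x k)\<^sup>2 \<le> (\<Sum>k\<in>I. a k * (x k)\<^sup>2)"
proof -
  define \<mu> where "\<mu> = (\<Sum>k\<in>I. a k * x k)"
  have "0 \<le> (\<Sum>k\<in>I. a k * (x k - \<mu>)\<^sup>2)"
    using assms by (intro sum_nonneg) auto
  also have "\<dots> = (\<Sum>k\<in>I. a k * (x k)\<^sup>2) - 2 * \<mu> * (\<Sum>k\<in>I. a k * x k) + \<mu>\<^sup>2 * sum a I"
    by (simp add: power2_eq_square algebra_simps sum.distrib sum_subtractf
        sum_distrib_left sum_distrib_right)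
  finally show ?thesis
    using assms(2) by (simp add: \<mu>_def power2_eq_square)
qed

lemma cmod_sum_weighted_square_le:
  fixes a :: "'i \<Rightarrow> real" and z :: "'i \<Rightarrow> complex"
  assumes "\<And>k. k \<in> I \<Longrightarrow> 0 \<le> a k" and "sum a I = 1"
  shows "(cmod (\<Sum>k\<in>I. of_real (a k) * z k))\<^sup>2 \<le> (\<Sum>k\<in>I. a k * (cmod (z k))\<^sup>2)"
proof -
  have "cmod (\<Sum>k\<in>I. of_real (a k) * z k) \<le> (\<Sum>k\<in>I. a k * cmod (z k))"
    by (rule order_trans[OF norm_sum]) (simp add: norm_mult assms(1))
  then have "(cmod (\<Sum>k\<in>I. of_real (a k) * z k))\<^sup>2 \<le> (\<Sum>k\<in>I. a k * cmod (z k))\<^sup>2"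
    by (simp add: power_mono)
  also have "\<dots> \<le> (\<Sum>k\<in>I. a k * (cmod (z k))\<^sup>2)"
    using assms by (rule sum_weighted_square_le)
  finally show ?thesis .
qed

lemma gram_quadratic_form_eq_sum_cmod_square:
  fixes b :: "'j \<Rightarrow> 'i \<Rightarrow> real" and v :: "'i \<Rightarrow> complex"
  shows "(\<Sum>i\<in>I. cnj (v i) * (\<Sum>k\<in>I. of_real (\<Sum>j\<in>J. b j i * b j k) * v k))
       = of_real (\<Sum>j\<in>J. (cmod (\<Sum>k\<in>I. of_real (b j k) * v k))\<^sup>2)"
proof -
  have "(\<Sum>i\<in>I. cnj (v i) * (\<Sum>k\<in>I. of_real (\<Sum>j\<in>J. b j i * b j k) * v k))
      = (\<Sum>i\<in>I. \<Sum>k\<in>I. \<Sum>j\<in>J. cnj (v i) * of_real (b j i) * of_real (b j k) * v k)"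
    by (simp add: sum_distrib_left sum_distrib_right mult_ac)
  also have "\<dots> = (\<Sum>j\<in>J. \<Sum>i\<in>I. \<Sum>k\<in>I. cnj (v i) * of_real (b j i) * of_real (b j k) * v k)"
    by (subst sum.swap) (intro sum.cong refl sum.swap)
  also have "\<dots> = (\<Sum>j\<in>J. cnj (\<Sum>k\<in>I. of_real (b j k) * v k) * (\<Sum>k\<in>I. of_real (b j k) * v k))"
    unfolding cnj_sum complex_cnj_mult complex_cnj_complex_of_real sum_product
    by (simp add: mult_ac)
  also have "\<dots> = of_real (\<Sum>j\<in>J. (cmod (\<Sum>k\<in>I. of_real (b j k) * v k))\<^sup>2)"
    by (simp only: of_real_sum complex_norm_square mult.commute)
  finally show ?thesis .
qed

lemma sum_cmod_square_stochastic_le: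
  fixes b :: "'j \<Rightarrow> 'i \<Rightarrow> real" and v :: "'i \<Rightarrow> complex"
  assumes "\<And>j k. j \<in> J \<Longrightarrow> k \<in> I \<Longrightarrow> 0 \<le> b j k"
    and "\<And>j. j \<in> J \<Longrightarrow> (\<Sum>k\<in>I. b j k) = 1"
  shows "(\<Sum>j\<in>J. (cmod (\<Sum>k\<in>I. of_real (b j k) * v k))\<^sup>2)
       \<le> (\<Sum>k\<in>I. (\<Sum>j\<in>J. b j k) * (cmod (v k))\<^sup>2)"
proof -
  have "(\<Sum>j\<in>J. (cmod (\<Sum>k\<in>I. of_real (b j k) * v k))\<^sup>2)
      \<le> (\<Sum>j\<in>J. \<Sum>k\<in>I. b j k * (cmod (v k))\<^sup>2)"
    using assms by (intro sum_mono cmod_sum_weighted_square_le) auto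
  also have "\<dots> = (\<Sum>k\<in>I. (\<Sum>j\<in>J. b j k) * (cmod (v k))\<^sup>2)"
    by (simp add: sum.swap[of _ J] sum_distrib_right)
  finally show ?thesis .
qed

text \<open>Here \<open>b j k\<close> is the entry \<open>A\<^sub>j\<^sub>k\<close> of a row-stochastic matrix, and \<open>eigen\<close> is the
  generalized eigenproblem \<open>A\<^sup>T A v = \<lambda> D v\<close> with \<open>D\<close> the diagonal of column sums of \<open>A\<close>.\<close>

lemma stochastic_gram_generalized_eigenvalue:
  fixes b :: "'j \<Rightarrow> 'i \<Rightarrow> real" and v :: "'i \<Rightarrow> complex" and lam :: complex
  assumes "finite I"
    and nonneg: "\<And>j k. j \<in> J \<Longrightarrow> k \<in> I \<Longrightarrow> 0 \<le> b j k"
    and stochastic: "\<And>j. j \<in> J \<Longrightarrow> (\<Sum>k\<in>I. b j k) = 1"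
    and col_pos: "\<And>k. k \<in> I \<Longrightarrow> 0 < (\<Sum>j\<in>J. b j k)"
    and eigen: "\<And>i. i \<in> I \<Longrightarrow>
      (\<Sum>k\<in>I. of_real (\<Sum>j\<in>J. b j i * b j k) * v k) = lam * of_real (\<Sum>j\<in>J. b j i) * v i"
    and "i\<^sub>0 \<in> I" "v i\<^sub>0 \<noteq> 0"
  shows "lam \<in> \<real> \<and> 0 \<le> Re lam \<and> Re lam \<le> 1"
proof -
  define Q where "Q = (\<Sum>k\<in>I. (\<Sum>j\<in>J. b j k) * (cmod (v k))\<^sup>2)"
  define S where "S = (\<Sum>j\<in>J. (cmod (\<Sum>k\<in>I. of_real (b j k) * v k))\<^sup>2)"
  have "lam * of_real Q = (\<Sum>i\<in>I. cnj (v i) * (lam * of_real (\<Sum>j\<in>J. b j i) * v i))"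
    unfolding Q_def of_real_sum[of _ I] sum_distrib_left
    by (intro sum.cong refl) (simp only: of_real_mult complex_norm_square mult_ac)
  also have "\<dots> = of_real S"
    using eigen gram_quadratic_form_eq_sum_cmod_square[of v b J I] by (simp add: S_def)
  finally have eq: "lam * of_real Q = of_real S" .
  have "0 < Q"
    unfolding Q_def using \<open>finite I\<close> \<open>i\<^sub>0 \<in> I\<close> \<open>v i\<^sub>0 \<noteq> 0\<close> col_pos
    by (intro sum_pos2[of _ i\<^sub>0]) (auto simp: less_imp_le)
  moreover from eq \<open>0 < Q\<close> have "lam = of_real (S / Q)"
    by (simp add: field_simps)
  moreover have "0 \<le> S" "S \<le> Q"
    unfolding S_def Q_def using nonneg stochastic
    by (auto intro: sum_nonneg sum_cmod_square_stochastic_le)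
  ultimately show ?thesis
    by simp
qed

lemma Lambda_gram_entry:
  assumes "i \<le> n" "k \<le> n"
  shows "(Lambda_mat n m B t * (transpose_mat (colloc_mat n m B t) * colloc_mat n m B t)) $$ (i, k)
     = 1 / (\<Sum>j\<le>m. B i (t j)) * (\<Sum>j\<le>m. B i (t j) * B k (t j))"
proof -
  let ?A = "colloc_mat n m B t"
  have gram: "(transpose_mat ?A * ?A) $$ (l, k) = (\<Sum>j\<le>m. B l (t j) * B k (t j))" if "l \<le> n" for l
    using that assms by (simp add: colloc_mat_def scalar_prod_def atLeast0LessThan lessThan_Suc_atMost)
  have "(Lambda_mat n m B t * (transpose_mat ?A * ?A)) $$ (i, k)
      = (\<Sum>l<n+1. (if i = l then 1 / (\<Sum>j\<le>m. B i (t j)) else 0) * (transpose_mat ?A * ?A) $$ (l, k))"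
    using assms by (simp add: Lambda_mat_def colloc_mat_def scalar_prod_def atLeast0LessThan)
  also have "\<dots> = 1 / (\<Sum>j\<le>m. B i (t j)) * (transpose_mat ?A * ?A) $$ (i, k)"
    using assms by (simp add: if_distrib[of "\<lambda>x. x * _"] sum.delta cong: if_cong)
  finally show ?thesis
    using gram assms by simp
qed

lemma Lambda_gram_mult_vec_index:
  assumes "v \<in> carrier_vec (n+1)" "i \<le> n"
  shows "(map_mat of_real (Lambda_mat n m B t * (transpose_mat (colloc_mat n m B t) * colloc_mat n m B t))
            *\<^sub>v v) $ i
       = of_real (1 / (\<Sum>j\<le>m. B i (t j))) * (\<Sum>k\<le>n. of_real (\<Sum>j\<le>m. B i (t j) * B k (t j)) * v $ k)"
proof -
  let ?M = "Lambda_mat n m B t * (transpose_mat (colloc_mat n m B t) * colloc_mat n m B t)"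
  have "dim_row ?M = n+1" "dim_col ?M = n+1"
    by (simp_all add: Lambda_mat_def colloc_mat_def)
  then have "(map_mat of_real ?M *\<^sub>v v) $ i = (\<Sum>k\<le>n. of_real (?M $$ (i, k)) * v $ k)"
    using assms by (simp add: scalar_prod_def atLeast0LessThan lessThan_Suc_atMost del: index_mult_mat)
  also have "\<dots> = (\<Sum>k\<le>n. of_real (1 / (\<Sum>j\<le>m. B i (t j))) * (of_real (\<Sum>j\<le>m. B i (t j) * B k (t j)) * v $ k))"
    using assms(2) by (intro sum.cong refl) (simp only: Lambda_gram_entry atMost_iff of_real_mult mult.assoc)
  finally show ?thesis
    by (simp only: sum_distrib_left)
qed

theorem lemma1:
  fixes n m :: nat and lam :: complex and B :: "nat \<Rightarrow> 'p \<Rightarrow> real" and t :: "nat \<Rightarrow> 'p"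
  assumes "n \<le> m"
    and "\<And>i x. i \<le> n \<Longrightarrow> B i x \<ge> 0"
    and "\<And>x. (\<Sum>i\<le>n. B i x) = 1"
    and "\<And>i. i \<le> n \<Longrightarrow> \<exists>j\<le>m. B i (t j) \<noteq> 0"
    and "eigenvalue (map_mat complex_of_real
           (Lambda_mat n m B t * (transpose_mat (colloc_mat n m B t) * colloc_mat n m B t))) lam"
  shows "lam \<in> \<real> \<and> 0 \<le> Re lam \<and> Re lam \<le> 1"
proof -
  let ?M = "Lambda_mat n m B t * (transpose_mat (colloc_mat n m B t) * colloc_mat n m B t)"
  obtain v where v: "v \<in> carrier_vec (n+1)" "v \<noteq> 0\<^sub>v (n+1)" "map_mat of_real ?M *\<^sub>v v = lam \<cdot>\<^sub>v v"
    using assms(5) by (auto simp: eigenvalue_def eigenvector_def Lambda_mat_def colloc_mat_def)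
  obtain i\<^sub>0 where "i\<^sub>0 \<le> n" "v $ i\<^sub>0 \<noteq> 0"
    using v(1,2) by (metis Suc_eq_plus1 carrier_vecD eq_vecI index_zero_vec less_Suc_eq_le)
  have col_pos: "0 < (\<Sum>j\<le>m. B i (t j))" if "i \<le> n" for i
  proof -
    obtain j where "j \<le> m" "B i (t j) \<noteq> 0"
      using assms(4) \<open>i \<le> n\<close> by blast
    then show ?thesis
      using assms(2) \<open>i \<le> n\<close> by (intro sum_pos2[of _ j]) (auto simp: order_less_le)
  qed
  have "(\<Sum>k\<le>n. of_real (\<Sum>j\<le>m. B i (t j) * B k (t j)) * v $ k) = lam * of_real (\<Sum>j\<le>m. B i (t j)) * v $ i"
    (is "?Gv = lam * of_real ?s * _") if "i \<le> n" for i
  proof -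
    have "of_real (1 / ?s) * ?Gv = lam * v $ i"
      using arg_cong[OF v(3), of "\<lambda>w. w $ i"] v(1) that
      by (simp only: Lambda_gram_mult_vec_index) simp
    then show ?thesis
      using col_pos[OF that] by (simp add: field_simps del: of_real_sum)
  qed
  then show ?thesis
    using stochastic_gram_generalized_eigenvalue[where b = "\<lambda>j k. B k (t j)" and I = "{..n}" and J = "{..m}"
        and v = "\<lambda>k. v $ k"] assms(2,3) col_pos \<open>i\<^sub>0 \<le> n\<close> \<open>v $ i\<^sub>0 \<noteq> 0\<close>
    by auto
qed

end
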